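(* Let $\phi=(1+\sqrt5)/2$, $R_0=(18-\sqrt5)/11$, $\alpha=R_0-1=2/(\phi+3)$, $\beta=\alpha/2=1/(\phi+3)$ and $\rho=\beta/\phi=(\phi-1)/(\phi+3)$. Let $P^A,P^B,S^A,S^B,Q$ be pairwise disjoint infinite sets of positive integers, each with a fixed enumeration, and for real $x\ge 0$ let $P^c_x$, $S^c_x$, $Q_x$ denote the first $\lfloor x\rfloor$ elements of $P^c$, $S^c$, $Q$ respectively. For $c\in\{A,B\}$, with $c'$ the other element of $\{A,B\}$, and integers $0<k\le t$, define $$F^c_{t,k}=P^c_{\alpha t+4}\cup\big(S^c_{\beta\min(t,\phi k)}\setminus S^c_{\beta(t-k)}\big)\cup\big(S^{c'}_{\beta k}\setminus S^{c'}_{\phi\beta(t-k)}\big)\cup\big(Q_{\rho\min(t,\phi k)}\setminus Q_{\phi\rho(t-k)}\big).$$ Then $\{F^c_{t,k}\}$ is an F-system, and for every positive integer $t$, $\left|\bigcup_{c\in\{A,B\}}\bigcup_{0<\kappa\le\tau\le t}F^c_{\tau,\kappa}\right|\le R_0 t+8$; in particular it is an $R_0$-competitive F-system.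
   Context: F-system: a family $\mathcal F=\{F^c_{t,k}\}$ of sets of positive integers, indexed by $c\in\{A,B\}$ and integers $0<k\le t$, such that (F1) $|F^c_{t,k}|\ge k$ for all $c,t,k$; and (F2) $F^A_{t,k}\cap F^B_{t',k'}=\emptyset$ for all $k\le t$, $k'\le t'$ with $k+k'\le\max(t,t')$. An F-system is $R$-competitive if there is a constant $\lambda$ (independent of $t$) such that for every positive integer $t$, $\left|\bigcup_{c\in\{A,B\}}\bigcup_{0<\kappa\le\tau\le t}F^c_{\tau,\kappa}\right|\le Rt+\lambda$. *)

theory Defs
  imports Complex_Main
begin

datatype color = A | B

fun other :: "color \<Rightarrow> color" where
  "other A = B" | "other B = A"

text \<open>F-system: a family F c t k (meaningful for integers 0 < k \<le> t).
  The cardinality condition (F1) is read with |X| = infinity for infinite X.\<close>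
definition F_system :: "(color \<Rightarrow> nat \<Rightarrow> nat \<Rightarrow> nat set) \<Rightarrow> bool" where
  "F_system F \<longleftrightarrow>
     (\<forall>c t k. 0 < k \<and> k \<le> t \<longrightarrow> (infinite (F c t k) \<or> k \<le> card (F c t k))) \<and>
     (\<forall>t k t' k'. 0 < k \<and> k \<le> t \<and> 0 < k' \<and> k' \<le> t' \<and> k + k' \<le> max t t'
        \<longrightarrow> F A t k \<inter> F B t' k' = {})"

definition F_union :: "(color \<Rightarrow> nat \<Rightarrow> nat \<Rightarrow> nat set) \<Rightarrow> nat \<Rightarrow> nat set" where
  "F_union F t = (\<Union>c. \<Union>\<tau>\<in>{1..t}. \<Union>\<kappa>\<in>{1..\<tau>}. F c \<tau> \<kappa>)"

definition competitive :: "real \<Rightarrow> (color \<Rightarrow> nat \<Rightarrow> nat \<Rightarrow> nat set) \<Rightarrow> bool" where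
  "competitive R F \<longleftrightarrow> F_system F \<and>
     (\<exists>lam::real. \<forall>t::nat. 0 < t \<longrightarrow>
        finite (F_union F t) \<and> real (card (F_union F t)) \<le> R * real t + lam)"

definition phi :: real where "phi = (1 + sqrt 5) / 2"
definition R0 :: real where "R0 = (18 - sqrt 5) / 11"
definition alpha :: real where "alpha = R0 - 1"
definition beta :: real where "beta = alpha / 2"
definition rho :: real where "rho = beta / phi"

definition firstn :: "(nat \<Rightarrow> nat) \<Rightarrow> real \<Rightarrow> nat set" where
  "firstn e x = e ` {..< nat \<lfloor>x\<rfloor>}"

definition enums_ok :: "(color \<Rightarrow> nat \<Rightarrow> nat) \<Rightarrow> (color \<Rightarrow> nat \<Rightarrow> nat) \<Rightarrow> (nat \<Rightarrow> nat) \<Rightarrow> bool" where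
  "enums_ok P S q \<longleftrightarrow>
     inj (P A) \<and> inj (P B) \<and> inj (S A) \<and> inj (S B) \<and> inj q \<and>
     (\<forall>n. 0 < P A n \<and> 0 < P B n \<and> 0 < S A n \<and> 0 < S B n \<and> 0 < q n) \<and>
     range (P A) \<inter> range (P B) = {} \<and> range (P A) \<inter> range (S A) = {} \<and>
     range (P A) \<inter> range (S B) = {} \<and> range (P A) \<inter> range q = {} \<and>
     range (P B) \<inter> range (S A) = {} \<and> range (P B) \<inter> range (S B) = {} \<and>
     range (P B) \<inter> range q = {} \<and> range (S A) \<inter> range (S B) = {} \<and>
     range (S A) \<inter> range q = {} \<and> range (S B) \<inter> range q = {}"

definition Fcons :: "(color \<Rightarrow> nat \<Rightarrow> nat) \<Rightarrow> (color \<Rightarrow> nat \<Rightarrow> nat) \<Rightarrow> (nat \<Rightarrow> nat)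
    \<Rightarrow> color \<Rightarrow> nat \<Rightarrow> nat \<Rightarrow> nat set" where
  "Fcons P S q c t k =
     firstn (P c) (alpha * real t + 4)
     \<union> (firstn (S c) (beta * min (real t) (phi * real k)) - firstn (S c) (beta * (real t - real k)))
     \<union> (firstn (S (other c)) (beta * real k) - firstn (S (other c)) (phi * beta * (real t - real k)))
     \<union> (firstn q (rho * min (real t) (phi * real k)) - firstn q (phi * rho * (real t - real k)))"

end

theory Submission imports Defs begin

(* Write F^c_{t,k} as P^c_{alpha t+4} together with three "bands" -- index
   intervals [lo, hi) of the enumerations S^c, S^{c'} and Q.
   (F1) The four pieces come from pairwise disjoint sets, and each band of
        length L contributes at least max 0 L - 1 elements; the real inequality
        mass_lower_bound (a case split on t <= phi k and t <= 2k, using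
        phi^2 = phi + 1 and beta (phi + 3) = 1) shows that the total mass is at
        least k + 4, which absorbs the four rounding losses.
   (F2) If k + k' <= max t t', say k <= t' - k', then every band of F^A_{t,k}
        ends before the band of F^B_{t',k'} in the same enumeration begins;
        the P-parts and different enumerations are disjoint by hypothesis.
   Competitiveness: all sets F^c_{tau,kappa} with tau <= t lie inside
        P^A_{alpha t+4}, P^B_{alpha t+4}, S^A_{beta t}, S^B_{beta t}, Q_{rho t},
        of total size at most (2 alpha + 2 beta + rho) t + 8 = R0 t + 8. *)

lemma sqrt5_bounds: "2 < sqrt (5::real)" "sqrt (5::real) < 3"
  by (simp_all add: real_less_rsqrt real_sqrt_less_iff real_less_lsqrt)

lemma phi_gt_1: "1 < phi"
  unfolding phi_def using sqrt5_bounds by simp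

lemma phi_square: "phi^2 = phi + 1"
  unfolding phi_def power2_eq_square by (simp add: algebra_simps)

lemma beta_closed_form: "beta = (7 - sqrt 5) / 22"
  unfolding beta_def alpha_def R0_def by simp

lemma beta_pos: "0 < beta"
  unfolding beta_closed_form using sqrt5_bounds by simp

lemma alpha_eq: "alpha = 2 * beta"
  unfolding beta_def by simp

lemma alpha_pos: "0 < alpha"
  using alpha_eq beta_pos by simp

lemma beta_phi: "beta * (phi + 3) = 1"
  unfolding beta_closed_form phi_def by (simp add: algebra_simps)

lemma rho_phi: "rho * phi = beta"
  unfolding rho_def using phi_gt_1 by simp

lemma rho_pos: "0 < rho"
  unfolding rho_def using beta_pos phi_gt_1 by simp

text \<open>rho = (phi - 1)/(phi + 3), a consequence of phi^2 = phi + 1.\<close>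
lemma rho_eq: "rho = beta * (phi - 1)"
proof -
  have "rho * phi = beta * (phi - 1) * phi"
    using rho_phi phi_square by (simp add: algebra_simps power2_eq_square)
  then show ?thesis using phi_gt_1 by simp
qed

text \<open>The growth rate R0 is exactly the sum of the rates of the five enumerations used.\<close>
lemma R0_budget: "R0 = 2 * alpha + 2 * beta + rho"
proof -
  have "2 * alpha + rho = 1"
    using beta_phi rho_eq alpha_eq by (simp add: algebra_simps)
  then show ?thesis using alpha_eq unfolding alpha_def by simp
qed

text \<open>The heart of (F1): the real lengths of the four pieces of F^c_{t,k} add
  up to at least k.  Negative band lengths count as zero.\<close>
lemma mass_lower_bound:
  fixes k t :: real
  assumes "0 < k" and "k \<le> t"
  shows "k \<le> alpha * t + max 0 (beta * min t (phi * k) - beta * (t - k))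
      + max 0 (beta * k - phi * beta * (t - k))
      + max 0 (rho * min t (phi * k) - phi * rho * (t - k))"
proof (cases "t \<le> phi * k")
  case True
  have "alpha * t + (beta * t - beta * (t - k)) + (beta * k - phi * beta * (t - k))
      + (rho * t - phi * rho * (t - k)) = k"
    using phi_square beta_phi alpha_eq rho_eq unfolding power2_eq_square by algebra
  moreover have "min t (phi * k) = t" using True by simp
  ultimately show ?thesis by linarith
next
  case False
  then have min: "min t (phi * k) = phi * k" by simp
  show ?thesis
  proof (cases "t \<le> 2 * k")
    case True
    have "alpha * t + (beta * (phi * k) - beta * (t - k)) + (rho * (phi * k) - phi * rho * (t - k)) = k"
      using beta_phi alpha_eq rho_phi by algebra
    then show ?thesis unfolding min by linarith
  next
    case False
    have "alpha * t + (beta * (phi * k) - beta * (t - k)) = k + beta * (t - 2 * k)"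
      using beta_phi alpha_eq by algebra
    moreover have "0 \<le> beta * (t - 2 * k)" using False beta_pos by simp
    ultimately show ?thesis unfolding min by linarith
  qed
qed

text \<open>A band of F^A_{t,k} ends before the matching band of F^B_{t',k'} starts as soon as k \<le> s = t' - k'
  (for any nonnegative rate c); this is the separation behind (F2).\<close>
lemma band_end_below:
  fixes c k s t :: real
  assumes "0 \<le> c" and "k \<le> s"
  shows "c * min t (phi * k) \<le> phi * c * s" and "c * k \<le> c * s"
proof -
  have "min t (phi * k) \<le> phi * s"
    using assms(2) phi_gt_1 by (simp add: min.coboundedI2)
  then have "c * min t (phi * k) \<le> c * (phi * s)" by (rule mult_left_mono[OF _ assms(1)])
  then show "c * min t (phi * k) \<le> phi * c * s" by (simp add: algebra_simps)
  show "c * k \<le> c * s" using assms by (simp add: mult_left_mono)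
qed

definition band :: "(nat \<Rightarrow> nat) \<Rightarrow> real \<Rightarrow> real \<Rightarrow> nat set" where
  "band e lo hi = firstn e hi - firstn e lo"

lemma Fcons_bands:
  "Fcons P S q c t k =
     firstn (P c) (alpha * real t + 4)
     \<union> band (S c) (beta * (real t - real k)) (beta * min (real t) (phi * real k))
     \<union> band (S (other c)) (phi * beta * (real t - real k)) (beta * real k)
     \<union> band q (phi * rho * (real t - real k)) (rho * min (real t) (phi * real k))"
  unfolding Fcons_def band_def ..

lemma firstn_mono: "a \<le> b \<Longrightarrow> firstn e a \<subseteq> firstn e b"
  unfolding firstn_def by (intro image_mono) (auto intro: order.strict_trans2 nat_mono floor_mono)

lemma firstn_range: "firstn e a \<subseteq> range e"
  unfolding firstn_def by auto

lemma finite_firstn: "finite (firstn e a)"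
  unfolding firstn_def by auto

lemma band_subset: "band e lo hi \<subseteq> firstn e hi"
  unfolding band_def by auto

lemma band_range: "band e lo hi \<subseteq> range e"
  using band_subset firstn_range by blast

lemma finite_band: "finite (band e lo hi)"
  unfolding band_def by (simp add: finite_firstn)

lemma card_firstn_le: "0 \<le> a \<Longrightarrow> real (card (firstn e a)) \<le> a"
proof -
  assume "0 \<le> a"
  have "card (firstn e a) \<le> nat \<lfloor>a\<rfloor>"
    unfolding firstn_def using card_image_le[of "{..<nat \<lfloor>a\<rfloor>}" e] by simp
  then show ?thesis using \<open>0 \<le> a\<close> by linarith
qed

lemma card_firstn_ge: "inj e \<Longrightarrow> a - 1 \<le> real (card (firstn e a))"
  unfolding firstn_def by (simp add: card_image inj_on_subset) linarith

lemma card_band_ge: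
  assumes "inj e" and "0 \<le> lo"
  shows "max 0 (hi - lo) - 1 \<le> real (card (band e lo hi))"
proof -
  have "band e lo hi = e ` ({..<nat \<lfloor>hi\<rfloor>} - {..<nat \<lfloor>lo\<rfloor>})"
    unfolding band_def firstn_def image_set_diff[OF assms(1)] ..
  also have "{..<nat \<lfloor>hi\<rfloor>} - {..<nat \<lfloor>lo\<rfloor>} = {nat \<lfloor>lo\<rfloor>..<nat \<lfloor>hi\<rfloor>}" by auto
  finally have "card (band e lo hi) = nat \<lfloor>hi\<rfloor> - nat \<lfloor>lo\<rfloor>"
    using assms(1) by (simp add: card_image inj_on_subset)
  then show ?thesis using assms(2) by simp linarith
qed

lemma band_disjoint:
  assumes "hi \<le> lo' \<or> hi' \<le> lo"
  shows "band e lo hi \<inter> band e lo' hi' = {}"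
  using assms firstn_mono[of hi lo' e] firstn_mono[of hi' lo e] unfolding band_def by blast

section \<open>Property (F1)\<close>

lemma card_Un4_disjoint:
  assumes "finite X0" "finite X1" "finite X2" "finite X3"
    and "X0 \<inter> X1 = {}" "X0 \<inter> X2 = {}" "X0 \<inter> X3 = {}"
    and "X1 \<inter> X2 = {}" "X1 \<inter> X3 = {}" "X2 \<inter> X3 = {}"
  shows "card (X0 \<union> X1 \<union> X2 \<union> X3) = card X0 + card X1 + card X2 + card X3"
  using assms by (simp add: card_Un_disjoint Int_Un_distrib2)

lemma enums_ok_colour:
  assumes "enums_ok P S q"
  shows "inj (P c)" "inj (S c)" "inj (S (other c))"
    "range (P c) \<inter> range (S c) = {}" "range (P c) \<inter> range (S (other c)) = {}"
    "range (P c) \<inter> range q = {}" "range (S c) \<inter> range (S (other c)) = {}"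
    "range (S c) \<inter> range q = {}" "range (S (other c)) \<inter> range q = {}"
  using assms unfolding enums_ok_def by (cases c; auto)+

lemma Fcons_card:
  assumes E: "enums_ok P S q" and "0 < k" "k \<le> t"
  shows "k \<le> card (Fcons P S q c t k)"
proof -
  let ?T = "real t" and ?K = "real k"
  define X0 where "X0 = firstn (P c) (alpha * ?T + 4)"
  define X1 where "X1 = band (S c) (beta * (?T - ?K)) (beta * min ?T (phi * ?K))"
  define X2 where "X2 = band (S (other c)) (phi * beta * (?T - ?K)) (beta * ?K)"
  define X3 where "X3 = band q (phi * rho * (?T - ?K)) (rho * min ?T (phi * ?K))"
  note colour = enums_ok_colour[OF E, where c = c]
  have inj_q: "inj q" using E unfolding enums_ok_def by simp
  have ranges: "X0 \<subseteq> range (P c)" "X1 \<subseteq> range (S c)" "X2 \<subseteq> range (S (other c))" "X3 \<subseteq> range q"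
    unfolding X0_def X1_def X2_def X3_def using firstn_range band_range by blast+
  have card_sum: "card (Fcons P S q c t k) = card X0 + card X1 + card X2 + card X3"
    unfolding Fcons_bands X0_def[symmetric] X1_def[symmetric] X2_def[symmetric] X3_def[symmetric]
    using colour(4-9) ranges
    by (intro card_Un4_disjoint) (auto simp: X0_def X1_def X2_def X3_def finite_firstn finite_band)
  have tk: "0 \<le> ?T - ?K" using assms by simp
  have "alpha * ?T + 4 - 1 \<le> real (card X0)"
    unfolding X0_def using card_firstn_ge[OF colour(1)] .
  moreover have "max 0 (beta * min ?T (phi * ?K) - beta * (?T - ?K)) - 1 \<le> real (card X1)"
    unfolding X1_def using card_band_ge[OF colour(2)] tk beta_pos by simp
  moreover have "max 0 (beta * ?K - phi * beta * (?T - ?K)) - 1 \<le> real (card X2)"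
    unfolding X2_def using card_band_ge[OF colour(3)] tk beta_pos phi_gt_1 by simp
  moreover have "max 0 (rho * min ?T (phi * ?K) - phi * rho * (?T - ?K)) - 1 \<le> real (card X3)"
    unfolding X3_def using card_band_ge[OF inj_q] tk rho_pos phi_gt_1 by simp
  ultimately show ?thesis
    using mass_lower_bound[of ?K ?T] assms card_sum by simp
qed

section \<open>Property (F2)\<close>

lemma pieces_disjoint:
  assumes "range e \<inter> range e' = {}"
  shows "firstn e a \<inter> firstn e' b = {}" "firstn e a \<inter> band e' lo hi = {}"
    "band e lo hi \<inter> firstn e' b = {}" "band e lo hi \<inter> band e' lo' hi' = {}"
proof -
  have "X \<inter> Y = {}" if "X \<subseteq> range e" "Y \<subseteq> range e'" for X Y
    using that assms by blast
  then show "firstn e a \<inter> firstn e' b = {}" "firstn e a \<inter> band e' lo hi = {}"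
    "band e lo hi \<inter> firstn e' b = {}" "band e lo hi \<inter> band e' lo' hi' = {}"
    by (simp_all add: firstn_range band_range)
qed

lemma Fcons_disjoint_if_bands_disjoint:
  assumes E: "enums_ok P S q"
    and SA: "band (S A) (beta * (real t - real k)) (beta * min (real t) (phi * real k))
           \<inter> band (S A) (phi * beta * (real t' - real k')) (beta * real k') = {}"
    and SB: "band (S B) (phi * beta * (real t - real k)) (beta * real k)
           \<inter> band (S B) (beta * (real t' - real k')) (beta * min (real t') (phi * real k')) = {}"
    and Q: "band q (phi * rho * (real t - real k)) (rho * min (real t) (phi * real k))
           \<inter> band q (phi * rho * (real t' - real k')) (rho * min (real t') (phi * real k')) = {}"
  shows "Fcons P S q A t k \<inter> Fcons P S q B t' k' = {}"
proof -
  have ranges_disjoint: "range (P A) \<inter> range (P B) = {}" "range (P A) \<inter> range (S A) = {}"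
    "range (P A) \<inter> range (S B) = {}" "range (P A) \<inter> range q = {}"
    "range (S A) \<inter> range (P B) = {}" "range (S A) \<inter> range (S B) = {}"
    "range (S A) \<inter> range q = {}" "range (S B) \<inter> range (P B) = {}"
    "range (S B) \<inter> range (S A) = {}" "range (S B) \<inter> range q = {}"
    "range q \<inter> range (P B) = {}" "range q \<inter> range (S B) = {}" "range q \<inter> range (S A) = {}"
    using E unfolding enums_ok_def by (simp_all add: Int_commute)
  show ?thesis
    unfolding Fcons_bands other.simps Int_Un_distrib Int_Un_distrib2 Un_empty
    using SA SB Q ranges_disjoint by (simp add: pieces_disjoint)
qed

text \<open>(F2): if k + k' \<le> max t t' then k \<le> t' - k' or k' \<le> t - k, and either way
  the bands are separated by band_end_below.\<close>
lemma Fcons_disjoint: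
  assumes E: "enums_ok P S q" and kk: "k + k' \<le> max t t'"
  shows "Fcons P S q A t k \<inter> Fcons P S q B t' k' = {}"
proof (rule Fcons_disjoint_if_bands_disjoint[OF E])
  let ?T = "real t" and ?K = "real k" and ?T' = "real t'" and ?K' = "real k'"
  have "?K \<le> ?T' - ?K' \<or> ?K' \<le> ?T - ?K" using kk by linarith
  then have "(beta * min ?T (phi * ?K) \<le> phi * beta * (?T' - ?K') \<and> beta * ?K \<le> beta * (?T' - ?K')
         \<and> rho * min ?T (phi * ?K) \<le> phi * rho * (?T' - ?K'))
     \<or> (beta * min ?T' (phi * ?K') \<le> phi * beta * (?T - ?K) \<and> beta * ?K' \<le> beta * (?T - ?K)
         \<and> rho * min ?T' (phi * ?K') \<le> phi * rho * (?T - ?K))"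
    using band_end_below beta_pos rho_pos by (meson less_imp_le)
  then show "band (S A) (beta * (?T - ?K)) (beta * min ?T (phi * ?K))
           \<inter> band (S A) (phi * beta * (?T' - ?K')) (beta * ?K') = {}"
    and "band (S B) (phi * beta * (?T - ?K)) (beta * ?K)
           \<inter> band (S B) (beta * (?T' - ?K')) (beta * min ?T' (phi * ?K')) = {}"
    and "band q (phi * rho * (?T - ?K)) (rho * min ?T (phi * ?K))
           \<inter> band q (phi * rho * (?T' - ?K')) (rho * min ?T' (phi * ?K')) = {}"
    by (metis band_disjoint)+
qed

section \<open>The size of the union\<close>

lemma Fcons_subset_prefixes:
  assumes "\<kappa> \<le> \<tau>" and "\<tau> \<le> t"
  shows "Fcons P S q c \<tau> \<kappa> \<subseteq> firstn (P c) (alpha * real t + 4) \<union> firstn (S c) (beta * real t)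
     \<union> firstn (S (other c)) (beta * real t) \<union> firstn q (rho * real t)"
proof -
  have tau: "real \<tau> \<le> real t" and kappa: "real \<kappa> \<le> real t" using assms by simp_all
  have mn: "min (real \<tau>) (phi * real \<kappa>) \<le> real t" using tau by linarith
  have "firstn (P c) (alpha * real \<tau> + 4) \<subseteq> firstn (P c) (alpha * real t + 4)"
    using tau alpha_pos by (intro firstn_mono) simp
  moreover have "firstn (S c) (beta * min (real \<tau>) (phi * real \<kappa>)) \<subseteq> firstn (S c) (beta * real t)"
    using mn beta_pos by (intro firstn_mono) simp
  moreover have "firstn (S (other c)) (beta * real \<kappa>) \<subseteq> firstn (S (other c)) (beta * real t)"
    using kappa beta_pos by (intro firstn_mono) simp
  moreover have "firstn q (rho * min (real \<tau>) (phi * real \<kappa>)) \<subseteq> firstn q (rho * real t)"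
    using mn rho_pos by (intro firstn_mono) simp
  ultimately show ?thesis
    unfolding Fcons_bands using band_subset by blast
qed

lemma F_union_bound:
  "finite (F_union (Fcons P S q) t) \<and> real (card (F_union (Fcons P S q) t)) \<le> R0 * real t + 8"
proof -
  define U0 where "U0 = firstn (P A) (alpha * real t + 4)"
  define U1 where "U1 = firstn (P B) (alpha * real t + 4)"
  define U2 where "U2 = firstn (S A) (beta * real t)"
  define U3 where "U3 = firstn (S B) (beta * real t)"
  define U4 where "U4 = firstn q (rho * real t)"
  have sub: "F_union (Fcons P S q) t \<subseteq> U0 \<union> U1 \<union> U2 \<union> U3 \<union> U4"
  proof
    fix x assume "x \<in> F_union (Fcons P S q) t"
    then obtain c \<tau> \<kappa> where "\<kappa> \<le> \<tau>" "\<tau> \<le> t" "x \<in> Fcons P S q c \<tau> \<kappa>"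
      unfolding F_union_def by auto
    then show "x \<in> U0 \<union> U1 \<union> U2 \<union> U3 \<union> U4"
      using Fcons_subset_prefixes[of \<kappa> \<tau> t P S q c]
      unfolding U0_def U1_def U2_def U3_def U4_def by (cases c) auto
  qed
  have fin: "finite (U0 \<union> U1 \<union> U2 \<union> U3 \<union> U4)"
    unfolding U0_def U1_def U2_def U3_def U4_def by (simp add: finite_firstn)
  have "card (U0 \<union> U1 \<union> U2 \<union> U3 \<union> U4) \<le> card U0 + card U1 + card U2 + card U3 + card U4"
    by (rule order.trans[OF card_Un_le] add_mono card_Un_le order.refl)+
  moreover have "real (card U0) \<le> alpha * real t + 4" "real (card U1) \<le> alpha * real t + 4"
    "real (card U2) \<le> beta * real t" "real (card U3) \<le> beta * real t" "real (card U4) \<le> rho * real t"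
    unfolding U0_def U1_def U2_def U3_def U4_def
    using card_firstn_le alpha_pos beta_pos rho_pos by simp_all
  ultimately have "real (card (U0 \<union> U1 \<union> U2 \<union> U3 \<union> U4)) \<le> R0 * real t + 8"
    unfolding R0_budget by (simp add: algebra_simps)
  moreover have "card (F_union (Fcons P S q) t) \<le> card (U0 \<union> U1 \<union> U2 \<union> U3 \<union> U4)"
    using card_mono[OF fin sub] .
  ultimately have "real (card (F_union (Fcons P S q) t)) \<le> R0 * real t + 8"
    by linarith
  then show ?thesis using finite_subset[OF sub fin] by blast
qed

theorem mainTheorem4:
  fixes P S :: "color \<Rightarrow> nat \<Rightarrow> nat" and q :: "nat \<Rightarrow> nat"
  assumes "enums_ok P S q"
  shows "F_system (Fcons P S q)
    \<and> (\<forall>t::nat. 0 < t \<longrightarrow> finite (F_union (Fcons P S q) t)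
          \<and> real (card (F_union (Fcons P S q) t)) \<le> R0 * real t + 8)
    \<and> competitive R0 (Fcons P S q)"
proof -
  have F: "F_system (Fcons P S q)"
    unfolding F_system_def using Fcons_card[OF assms] Fcons_disjoint[OF assms] by blast
  moreover have bound: "\<forall>t::nat. 0 < t \<longrightarrow> finite (F_union (Fcons P S q) t)
          \<and> real (card (F_union (Fcons P S q) t)) \<le> R0 * real t + 8"
    using F_union_bound by blast
  moreover have "competitive R0 (Fcons P S q)"
    unfolding competitive_def using F bound by blast
  ultimately show ?thesis by blast
qed

end
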